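(* There is some real $\alpha>1/2$ and an open subset $U\subseteq\mathbb{C}$ such that $\mathcal{M}\cap U$ is equal to the interval $[1/2,\alpha)$.
   Context: For $z\in\mathbb{D}^*=\{0<|z|<1\}$, $f(x)=zx$, $g(x)=z(x-1)+1$, $\Lambda_z$ is the unique nonempty compact subset of $\mathbb{C}$ with $\Lambda_z=f(\Lambda_z)\cup g(\Lambda_z)$, and $\mathcal{M}=\{z\in\mathbb{D}^*:\Lambda_z\text{ connected}\}$. *)

theory Defs
  imports "HOL-Analysis.Analysis"
begin

definition attractor :: "complex \<Rightarrow> complex set" where
  "attractor z = (THE L. compact L \<and> L \<noteq> {} \<and>
      L = (\<lambda>x. z * x) ` L \<union> (\<lambda>x. z * (x - 1) + 1) ` L)"

definition connectedness_locus :: "complex set" where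
  "connectedness_locus = {z. 0 < norm z \<and> norm z < 1 \<and> connected (attractor z)}"

end

theory Submission
  imports Defs
begin

text \<open>For real \<open>z = x\<close> the segment \<open>[0,1]\<close> is mapped onto \<open>[0,x] \<union> [1-x,1]\<close>; so for
  \<open>x \<ge> 1/2\<close> it is the attractor, while for \<open>x < 1/2\<close> the attractor lies in \<open>[0,1]\<close> and its
  two pieces \<open>z \<Lambda>\<close> and \<open>z (\<Lambda> - 1) + 1\<close> are separated.
  For non-real \<open>z\<close> near \<open>1/2\<close> the two pieces meet iff \<open>1\<close> is one of the scaled differences
  \<open>(p - q) z / (1 - z)\<close>, \<open>p, q \<in> \<Lambda>\<close>. These form a bounded set each of whose points is sent
  back into it by one of the maps \<open>t \<mapsto> t / z - e\<close>, \<open>e \<in> {-1, 0, 1}\<close>; as \<open>1 / z \<approx> 2\<close> these maps expand imaginary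
  parts, which excludes \<open>1\<close>.\<close>

definition hutchinson :: "complex \<Rightarrow> complex set \<Rightarrow> complex set" where
  "hutchinson z L = (\<lambda>x. z * x) ` L \<union> (\<lambda>x. z * (x - 1) + 1) ` L"

lemma mem_hutchinson_iff:
  "p \<in> hutchinson z L \<longleftrightarrow> (\<exists>x\<in>L. \<exists>a\<in>{0,1}. p = z * x + a * (1 - z))"
  unfolding hutchinson_def by (auto simp: algebra_simps)

lemma hutchinson_mono: "L \<subseteq> L' \<Longrightarrow> hutchinson z L \<subseteq> hutchinson z L'"
  unfolding hutchinson_def by auto

lemma compact_hutchinson: "compact L \<Longrightarrow> compact (hutchinson z L)"
  unfolding hutchinson_def
  by (intro compact_Un compact_continuous_image continuous_intros) auto

text \<open>Both maps contract by the factor \<open>norm z\<close>, so by induction every point of \<open>L1\<close>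
  lies within \<open>norm z ^ n * M\<close> of \<open>L2\<close>.\<close>

lemma hutchinson_subinvariant_subset:
  assumes z: "norm z < 1" and "bounded L1" and L1: "L1 \<subseteq> hutchinson z L1"
    and "closed L2" and "L2 \<noteq> {}" and L2: "hutchinson z L2 \<subseteq> L2"
  shows "L1 \<subseteq> L2"
proof
  fix p assume "p \<in> L1"
  obtain q0 where "q0 \<in> L2" using \<open>L2 \<noteq> {}\<close> by auto
  obtain M where M: "\<forall>x\<in>L1. dist q0 x \<le> M"
    using \<open>bounded L1\<close> bounded_any_center by blast
  have approx: "\<forall>p\<in>L1. \<exists>q\<in>L2. dist p q \<le> norm z ^ n * M" for n
  proof (induction n)
    case 0
    then show ?case using M \<open>q0 \<in> L2\<close> by (auto simp: dist_commute)
  next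
    case (Suc n)
    show ?case
    proof
      fix p assume "p \<in> L1"
      then have "p \<in> hutchinson z L1" using L1 by blast
      then obtain x a where x: "x \<in> L1" "a \<in> {0,1}" "p = z * x + a * (1 - z)"
        unfolding mem_hutchinson_iff by blast
      obtain q where q: "q \<in> L2" "dist x q \<le> norm z ^ n * M"
        using Suc x(1) by blast
      have "z * q + a * (1 - z) \<in> hutchinson z L2"
        unfolding mem_hutchinson_iff using q(1) x(2) by blast
      then have "z * q + a * (1 - z) \<in> L2" using L2 by blast
      moreover have "dist p (z * q + a * (1 - z)) = norm z * dist x q"
        by (simp add: x(3) dist_norm norm_mult[symmetric] algebra_simps)
      moreover have "norm z * dist x q \<le> norm z ^ Suc n * M"
        using q(2) mult_left_mono[OF q(2), of "norm z"] by (simp add: mult.assoc)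
      ultimately show "\<exists>q\<in>L2. dist p q \<le> norm z ^ Suc n * M"
        by (intro bexI[of _ "z * q + a * (1 - z)"]) simp_all
    qed
  qed
  have "\<exists>q\<in>L2. dist q p < e" if "e > 0" for e
  proof -
    have "(\<lambda>n. norm z ^ n * M) \<longlonglongrightarrow> 0"
      using LIMSEQ_power_zero[of "norm z"] z by (intro tendsto_mult_left_zero) auto
    then have "\<forall>\<^sub>F n in sequentially. norm z ^ n * M < e"
      using \<open>e > 0\<close> by (rule order_tendstoD)
    then obtain n where "norm z ^ n * M < e"
      by (auto simp: eventually_sequentially)
    moreover obtain q where "q \<in> L2" "dist p q \<le> norm z ^ n * M"
      using approx[of n] \<open>p \<in> L1\<close> by blast
    ultimately show ?thesis by (metis dist_commute order.strict_trans1)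
  qed
  then show "p \<in> L2" using closed_approachable[OF \<open>closed L2\<close>] by blast
qed

lemma hutchinson_cball_subset:
  assumes "norm z * R + (1 + norm z) \<le> R"
  shows "hutchinson z (cball 0 R) \<subseteq> cball 0 R"
proof
  fix p assume "p \<in> hutchinson z (cball 0 R)"
  then obtain x a where x: "x \<in> cball 0 R" "a \<in> {0,1}" "p = z * x + a * (1 - z)"
    unfolding mem_hutchinson_iff by blast
  have "norm (a * (1 - z)) \<le> 1 + norm z"
    using x(2) norm_triangle_ineq4[of 1 z] by auto
  then have "norm p \<le> norm z * norm x + (1 + norm z)"
    using norm_triangle_ineq[of "z * x" "a * (1 - z)"] by (simp add: x(3) norm_mult)
  also have "\<dots> \<le> norm z * R + (1 + norm z)"
    using x(1) by (simp add: mult_left_mono)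
  finally show "p \<in> cball 0 R" using assms by simp
qed

lemma Inter_decseq_image_Un:
  fixes f g :: "'a \<Rightarrow> 'b"
  assumes "inj f" "inj g" "decseq A"
  shows "(\<Inter>n. f ` A n \<union> g ` A n) \<subseteq> f ` (\<Inter>n. A n) \<union> g ` (\<Inter>n. A n)"
proof
  have f_Inter: "f ` (\<Inter>n. A n) = (\<Inter>n. f ` A n)"
    using \<open>inj f\<close> by (intro image_INT) auto
  have g_Inter: "g ` (\<Inter>n. A n) = (\<Inter>n. g ` A n)"
    using \<open>inj g\<close> by (intro image_INT) auto
  fix x assume x: "x \<in> (\<Inter>n. f ` A n \<union> g ` A n)"
  show "x \<in> f ` (\<Inter>n. A n) \<union> g ` (\<Inter>n. A n)"
  proof (cases "\<forall>n. x \<in> f ` A n")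
    case True
    then show ?thesis unfolding f_Inter by blast
  next
    case False
    then obtain m where m: "x \<notin> f ` A m" by blast
    have "x \<in> g ` A n" for n
    proof -
      have "A (max m n) \<subseteq> A m" "A (max m n) \<subseteq> A n"
        using \<open>decseq A\<close> by (auto simp: decseq_def)
      then show ?thesis using x m by blast
    qed
    then show ?thesis unfolding g_Inter by blast
  qed
qed

lemma hutchinson_fixpoint_in_invariant_compact:
  assumes "z \<noteq> 0" and K: "compact K" "K \<noteq> {}" "hutchinson z K \<subseteq> K"
  shows "\<exists>L. compact L \<and> L \<noteq> {} \<and> hutchinson z L = L"
proof -
  define A where "A n = (hutchinson z ^^ n) K" for n
  have A_Suc: "A (Suc n) = hutchinson z (A n)" for n
    by (simp add: A_def)
  have "decseq A"
  proof (rule decseq_SucI)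
    show "A (Suc n) \<subseteq> A n" for n
      by (induction n) (use K in \<open>simp_all add: A_def hutchinson_mono\<close>)
  qed
  have compact_A: "compact (A n)" for n
    by (induction n) (use K in \<open>simp_all add: A_def compact_hutchinson\<close>)
  have "A n \<noteq> {}" for n
    by (induction n) (use K in \<open>simp_all add: A_def hutchinson_def\<close>)
  define L where "L = (\<Inter>n. A n)"
  have "L \<noteq> {}"
    unfolding L_def using compact_A \<open>A _ \<noteq> {}\<close> \<open>decseq A\<close>
    by (intro compact_nest) (auto simp: decseq_def)
  moreover have "compact L"
    unfolding L_def using compact_A by (intro compact_Inter) auto
  moreover have "hutchinson z L \<subseteq> L"
  proof -
    have "hutchinson z L \<subseteq> A (Suc n)" for n
      unfolding A_Suc L_def by (intro hutchinson_mono) auto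
    then show ?thesis
      using \<open>decseq A\<close> by (auto simp: L_def decseq_Suc_iff)
  qed
  moreover have "L \<subseteq> hutchinson z L"
  proof -
    have "L \<subseteq> (\<Inter>n. hutchinson z (A n))"
      unfolding L_def A_Suc[symmetric] by blast
    also have "\<dots> \<subseteq> hutchinson z L"
      unfolding hutchinson_def L_def using \<open>z \<noteq> 0\<close> \<open>decseq A\<close>
      by (intro Inter_decseq_image_Un) (auto intro: injI)
    finally show ?thesis .
  qed
  ultimately show ?thesis by blast
qed

lemma hutchinson_fixpoint_exists:
  assumes "norm z < 1" "z \<noteq> 0"
  shows "\<exists>L. compact L \<and> L \<noteq> {} \<and> hutchinson z L = L"
proof (rule hutchinson_fixpoint_in_invariant_compact[OF \<open>z \<noteq> 0\<close>])
  define R where "R = (1 + norm z) / (1 - norm z)"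
  have "norm z * R + (1 + norm z) = R"
    using \<open>norm z < 1\<close> by (simp add: R_def field_simps)
  then show "hutchinson z (cball 0 R) \<subseteq> cball 0 R"
    by (intro hutchinson_cball_subset) simp
  have "R \<ge> 0"
    unfolding R_def using \<open>norm z < 1\<close> by (intro divide_nonneg_pos) auto
  then show "cball 0 R \<noteq> {}" by simp
qed simp

lemma attractor_eqI:
  assumes z: "norm z < 1" and L: "compact L" "L \<noteq> {}" "hutchinson z L = L"
  shows "attractor z = L"
  unfolding attractor_def hutchinson_def[symmetric]
proof (rule the_equality)
  show "compact L \<and> L \<noteq> {} \<and> L = hutchinson z L" using L by simp
  fix L' assume L': "compact L' \<and> L' \<noteq> {} \<and> L' = hutchinson z L'"
  show "L' = L"
  proof
    show "L' \<subseteq> L"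
      using hutchinson_subinvariant_subset[OF z, of L' L] L L'
      by (simp add: compact_imp_bounded compact_imp_closed)
    show "L \<subseteq> L'"
      using hutchinson_subinvariant_subset[OF z, of L L'] L L'
      by (simp add: compact_imp_bounded compact_imp_closed)
  qed
qed

lemma
  assumes "norm z < 1" "z \<noteq> 0"
  shows compact_attractor: "compact (attractor z)"
    and attractor_nonempty: "attractor z \<noteq> {}"
    and hutchinson_attractor: "hutchinson z (attractor z) = attractor z"
proof -
  obtain L where L: "compact L" "L \<noteq> {}" "hutchinson z L = L"
    using hutchinson_fixpoint_exists[OF assms] by blast
  moreover have "attractor z = L"
    using attractor_eqI[OF \<open>norm z < 1\<close> L] .
  ultimately show "compact (attractor z)" "attractor z \<noteq> {}"
    "hutchinson z (attractor z) = attractor z" by simp_all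
qed

lemma attractor_subset:
  assumes z: "norm z < 1" "z \<noteq> 0" and "closed L" "L \<noteq> {}" "hutchinson z L \<subseteq> L"
  shows "attractor z \<subseteq> L"
proof (rule hutchinson_subinvariant_subset[OF z(1)])
  show "bounded (attractor z)"
    using compact_attractor[OF z] by (rule compact_imp_bounded)
  show "attractor z \<subseteq> hutchinson z (attractor z)"
    using hutchinson_attractor[OF z] by simp
qed (use assms in simp_all)

lemma not_connected_attractor_if_disjoint:
  assumes z: "norm z < 1" "z \<noteq> 0"
    and disjoint: "(\<lambda>x. z * x) ` attractor z \<inter> (\<lambda>x. z * (x - 1) + 1) ` attractor z = {}"
  shows "\<not> connected (attractor z)"
proof -
  let ?A = "(\<lambda>x. z * x) ` attractor z" and ?B = "(\<lambda>x. z * (x - 1) + 1) ` attractor z"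
  have L: "attractor z = ?A \<union> ?B"
    using hutchinson_attractor[OF z] by (simp add: hutchinson_def)
  have "closed ?A" "closed ?B"
    using compact_attractor[OF z]
    by (intro compact_imp_closed compact_continuous_image continuous_intros; simp)+
  moreover have "?A \<inter> attractor z \<noteq> {}" "?B \<inter> attractor z \<noteq> {}"
    using attractor_nonempty[OF z] L by auto
  ultimately show ?thesis
    unfolding connected_closed using L disjoint by blast
qed

lemma
  fixes x :: real
  assumes "0 \<le> x"
  shows image_mult_of_real_unit_interval:
      "(\<lambda>p. of_real x * p) ` of_real ` {0..1} = complex_of_real ` {0..x}"
    and image_affine_of_real_unit_interval:
      "(\<lambda>p. of_real x * (p - 1) + 1) ` of_real ` {0..1} = complex_of_real ` {1 - x..1}"
proof -
  have "(\<lambda>p. of_real x * p) ` of_real ` {0..1} = complex_of_real ` (\<lambda>t. x * t + 0) ` {0..1}"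
    unfolding image_image by simp
  also have "\<dots> = complex_of_real ` {0..x}"
    using assms by (simp only: image_affinity_atLeastAtMost) simp
  finally show "(\<lambda>p. of_real x * p) ` of_real ` {0..1} = complex_of_real ` {0..x}" .
  have "(\<lambda>p. of_real x * (p - 1) + 1) ` of_real ` {0..1}
      = complex_of_real ` (\<lambda>t. x * t + (1 - x)) ` {0..1}"
    unfolding image_image by (simp add: algebra_simps)
  also have "\<dots> = complex_of_real ` {1 - x..1}"
    using assms by (simp only: image_affinity_atLeastAtMost) simp
  finally show "(\<lambda>p. of_real x * (p - 1) + 1) ` of_real ` {0..1} = complex_of_real ` {1 - x..1}" .
qed

lemma hutchinson_of_real_unit_interval:
  assumes "0 \<le> x"
  shows "hutchinson (of_real x) (of_real ` {0..1}) = complex_of_real ` ({0..x} \<union> {1 - x..1})"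
  unfolding hutchinson_def image_Un
  using image_mult_of_real_unit_interval[OF assms] image_affine_of_real_unit_interval[OF assms]
  by simp

lemma compact_of_real_unit_interval: "compact (complex_of_real ` {0..1})"
  by (intro compact_continuous_image continuous_intros) auto

lemma attractor_of_real_ge_half:
  assumes "1/2 \<le> x" "x < 1"
  shows "attractor (of_real x) = of_real ` {0..1}"
proof (rule attractor_eqI)
  have "{0..x} \<union> {1 - x..1} = {0..1::real}"
    using assms by auto
  then show "hutchinson (of_real x) (of_real ` {0..1}) = of_real ` {0..1}"
    using assms by (simp add: hutchinson_of_real_unit_interval)
qed (use assms compact_of_real_unit_interval in auto)

lemma not_connected_attractor_of_real_lt_half:
  assumes "0 < x" "x < 1/2"
  shows "\<not> connected (attractor (of_real x))"
proof (rule not_connected_attractor_if_disjoint)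
  let ?z = "complex_of_real x"
  show z: "norm ?z < 1" "?z \<noteq> 0" using assms by auto
  have "attractor ?z \<subseteq> of_real ` {0..1}"
  proof (rule attractor_subset[OF z])
    show "hutchinson ?z (of_real ` {0..1}) \<subseteq> of_real ` {0..1}"
      using assms by (auto simp: hutchinson_of_real_unit_interval)
  qed (use compact_of_real_unit_interval in \<open>auto intro: compact_imp_closed\<close>)
  then have "(\<lambda>p. ?z * p) ` attractor ?z \<subseteq> of_real ` {0..x}"
    and "(\<lambda>p. ?z * (p - 1) + 1) ` attractor ?z \<subseteq> of_real ` {1 - x..1}"
    using image_mult_of_real_unit_interval[of x] image_affine_of_real_unit_interval[of x] assms
    by (metis image_mono less_imp_le)+
  moreover have "complex_of_real ` {0..x} \<inter> of_real ` {1 - x..1} = {}"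
    using assms by auto
  ultimately show "(\<lambda>p. ?z * p) ` attractor ?z \<inter> (\<lambda>p. ?z * (p - 1) + 1) ` attractor ?z = {}"
    by blast
qed

lemma of_real_in_connectedness_locus_iff:
  assumes "0 < x" "x < 1"
  shows "complex_of_real x \<in> connectedness_locus \<longleftrightarrow> 1/2 \<le> x"
proof -
  have "connected (complex_of_real ` {0..1})"
    by (intro connected_continuous_image continuous_intros) auto
  then have "connected (attractor (of_real x)) \<longleftrightarrow> 1/2 \<le> x"
    using assms attractor_of_real_ge_half not_connected_attractor_of_real_lt_half
    by (cases "1/2 \<le> x") auto
  then show ?thesis
    using assms by (simp add: connectedness_locus_def)
qed

definition digit_invariant :: "complex \<Rightarrow> complex set \<Rightarrow> bool" where
  "digit_invariant w T \<longleftrightarrow> (\<forall>t\<in>T. \<exists>e\<in>{-1,0,1}. w * t - e \<in> T)"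

lemma bounded_climb_below_threshold:
  fixes \<phi> :: "'a \<Rightarrow> real"
  assumes bound: "\<forall>t\<in>T. \<phi> t \<le> B" and "c > 0"
    and climb: "\<And>t. t \<in> T \<Longrightarrow> m \<le> \<phi> t \<Longrightarrow> \<exists>t'\<in>T. \<phi> t + c \<le> \<phi> t'"
    and "t \<in> T"
  shows "\<phi> t < m"
proof (rule ccontr)
  assume "\<not> \<phi> t < m"
  have "\<exists>t'\<in>T. \<phi> t + c * real k \<le> \<phi> t'" for k
  proof (induction k)
    case 0
    then show ?case using \<open>t \<in> T\<close> by auto
  next
    case (Suc k)
    then obtain t' where "t' \<in> T" "\<phi> t + c * real k \<le> \<phi> t'" by blast
    moreover have "m \<le> \<phi> t'"
      using calculation \<open>\<not> \<phi> t < m\<close> \<open>c > 0\<close> by (smt (verit) mult_nonneg_nonneg of_nat_0_le_iff)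
    ultimately obtain t'' where "t'' \<in> T" "\<phi> t' + c \<le> \<phi> t''" using climb by blast
    then show ?case using \<open>\<phi> t + c * real k \<le> \<phi> t'\<close> by (intro bexI[of _ t'']) (auto simp: algebra_simps)
  qed
  moreover obtain k where "B - \<phi> t < real k * c"
    using reals_Archimedean3[OF \<open>c > 0\<close>] by blast
  ultimately show False using bound by (smt (verit, best) mult.commute)
qed

lemma digit_invariant_norm_bound:
  assumes T: "digit_invariant w T" "bounded T" and w: "19/10 \<le> Re w" and "t \<in> T"
  shows "norm t < 3/2"
proof -
  obtain B where B: "\<forall>t\<in>T. norm t \<le> B" using \<open>bounded T\<close> by (auto simp: bounded_iff)
  have "19/10 \<le> norm w" using w abs_Re_le_cmod[of w] by linarith
  show ?thesis
  proof (rule bounded_climb_below_threshold[OF B _ _ \<open>t \<in> T\<close>])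
    fix s assume "s \<in> T" "3/2 \<le> norm s"
    then obtain e where e: "e \<in> {-1,0,1}" "w * s - e \<in> T"
      using T(1) unfolding digit_invariant_def by blast
    have "norm s + 7/20 \<le> 19/10 * norm s - 1"
      using \<open>3/2 \<le> norm s\<close> by simp
    also have "\<dots> \<le> norm w * norm s - norm e"
      using e(1) \<open>19/10 \<le> norm w\<close> mult_right_mono[of "19/10" "norm w" "norm s"] by auto
    also have "\<dots> \<le> norm (w * s - e)"
      using norm_triangle_ineq2[of "w * s" e] by (simp add: norm_mult)
    finally show "\<exists>t'\<in>T. norm s + 7/20 \<le> norm t'" using e(2) by blast
  qed simp
qed

lemma digit_invariant_Im_bound:
  assumes T: "digit_invariant w T" "bounded T" and w: "19/10 \<le> Re w" "Im w \<noteq> 0"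
    and "t \<in> T"
  shows "\<bar>Im t\<bar> < 2 * \<bar>Im w\<bar>"
proof -
  obtain B where "\<forall>t\<in>T. norm t \<le> B" using \<open>bounded T\<close> by (auto simp: bounded_iff)
  then have B: "\<forall>t\<in>T. \<bar>Im t\<bar> \<le> B" using abs_Im_le_cmod order_trans by blast
  show ?thesis
  proof (rule bounded_climb_below_threshold[OF B _ _ \<open>t \<in> T\<close>])
    show "3/10 * \<bar>Im w\<bar> > 0" using w(2) by simp
    fix s assume "s \<in> T" "2 * \<bar>Im w\<bar> \<le> \<bar>Im s\<bar>"
    then obtain e where e: "e \<in> {-1,0,1}" "w * s - e \<in> T"
      using T(1) unfolding digit_invariant_def by blast
    have "\<bar>Re s\<bar> \<le> 3/2"
      using digit_invariant_norm_bound[OF T w(1) \<open>s \<in> T\<close>] abs_Re_le_cmod[of s] by linarith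
    then have "\<bar>Im w * Re s\<bar> \<le> \<bar>Im w\<bar> * (3/2)"
      unfolding abs_mult by (rule mult_left_mono) simp
    moreover have "19/10 * \<bar>Im s\<bar> \<le> \<bar>Re w * Im s\<bar>"
      unfolding abs_mult by (rule mult_right_mono) (use w in auto)
    moreover have "Im (w * s - e) = Re w * Im s + Im w * Re s"
      using e(1) by auto
    ultimately have "\<bar>Im s\<bar> + 3/10 * \<bar>Im w\<bar> \<le> \<bar>Im (w * s - e)\<bar>"
      using \<open>2 * \<bar>Im w\<bar> \<le> \<bar>Im s\<bar>\<close> by linarith
    then show "\<exists>t'\<in>T. \<bar>Im s\<bar> + 3/10 * \<bar>Im w\<bar> \<le> \<bar>Im t'\<bar>" using e(2) by blast
  qed
qed

text \<open>Two digit steps starting at \<open>1\<close> already produce an imaginary part of at least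
  \<open>2 * \<bar>Im w\<bar>\<close>.\<close>

lemma one_notin_digit_invariant:
  assumes T: "digit_invariant w T" "bounded T" and w: "19/10 \<le> Re w" "Im w \<noteq> 0"
  shows "1 \<notin> T"
proof
  assume "1 \<in> T"
  then obtain e where e: "e \<in> {-1,0,1}" "w * 1 - e \<in> T"
    using T(1) unfolding digit_invariant_def by blast
  then obtain e' where e': "e' \<in> {-1,0,1}" "w * (w * 1 - e) - e' \<in> T"
    using T(1) unfolding digit_invariant_def by blast
  have "2 \<le> 2 * Re w - Re e" using e(1) w(1) by auto
  then have "2 * \<bar>Im w\<bar> \<le> \<bar>Im w\<bar> * (2 * Re w - Re e)"
    by (metis abs_ge_zero mult.commute mult_left_mono)
  also have "\<dots> = \<bar>Im w * (2 * Re w - Re e)\<bar>"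
    using \<open>2 \<le> 2 * Re w - Re e\<close> by (simp add: abs_mult)
  also have "Im w * (2 * Re w - Re e) = Im (w * (w * 1 - e) - e')"
    using e(1) e'(1) by (auto simp: algebra_simps)
  finally show False
    using digit_invariant_Im_bound[OF T w e'(2)] by linarith
qed

lemma not_connected_attractor_nonreal:
  assumes z: "norm z < 1" "z \<noteq> 0" and w: "19/10 \<le> Re (1 / z)" and "Im z \<noteq> 0"
  shows "\<not> connected (attractor z)"
proof (rule not_connected_attractor_if_disjoint[OF z])
  let ?L = "attractor z"
  define c where "c = (1 - z) / z"
  have "z \<noteq> 1" using z(1) by auto
  then have "c \<noteq> 0" using z(2) by (simp add: c_def)
  define T where "T = (\<lambda>d. d / c) ` {p - q | p q. p \<in> ?L \<and> q \<in> ?L}"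
  have "bounded T"
    unfolding T_def using compact_attractor[OF z] \<open>c \<noteq> 0\<close>
    by (intro compact_imp_bounded compact_continuous_image compact_differences continuous_intros) auto
  moreover have "digit_invariant (1 / z) T"
    unfolding digit_invariant_def
  proof
    fix t assume "t \<in> T"
    then obtain p q where pq: "p \<in> ?L" "q \<in> ?L" "t = (p - q) / c" by (auto simp: T_def)
    then have "p \<in> hutchinson z ?L" "q \<in> hutchinson z ?L"
      using hutchinson_attractor[OF z] by auto
    then obtain p' q' a b where p': "p' \<in> ?L" "a \<in> {0,1}" "p = z * p' + a * (1 - z)"
      and q': "q' \<in> ?L" "b \<in> {0,1}" "q = z * q' + b * (1 - z)"
      unfolding mem_hutchinson_iff by blast
    have "1 / z * t - (a - b) = (p' - q') / c"
      using z(2) \<open>c \<noteq> 0\<close> by (simp add: pq(3) p'(3) q'(3) c_def field_simps)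
    moreover have "(p' - q') / c \<in> T" using p'(1) q'(1) by (auto simp: T_def)
    moreover have "a - b \<in> {-1,0,1}" using p'(2) q'(2) by auto
    ultimately show "\<exists>e\<in>{-1,0,1}. 1 / z * t - e \<in> T" by metis
  qed
  moreover have "Im (1 / z) \<noteq> 0" using \<open>Im z \<noteq> 0\<close> z(2) by (simp add: Im_divide)
  ultimately have "1 \<notin> T" using w by (intro one_notin_digit_invariant)
  show "(\<lambda>x. z * x) ` ?L \<inter> (\<lambda>x. z * (x - 1) + 1) ` ?L = {}"
  proof (safe)
    fix p q assume pq: "p \<in> ?L" "q \<in> ?L" "z * p = z * (q - 1) + 1"
    then have "(p - q) / c = 1"
      using z(2) \<open>c \<noteq> 0\<close> by (simp add: c_def field_simps)
    then have "1 \<in> T" using pq(1,2) unfolding T_def by force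
    then show "z * p \<in> {}" using \<open>1 \<notin> T\<close> by blast
  qed
qed

lemma Re_inverse_ge_near_half:
  fixes z :: complex
  assumes "dist z (1/2) < 1/200"
  shows "19/10 \<le> Re (1 / z)"
proof -
  have d: "norm (z - 1/2) < 1/200" using assms by (simp add: dist_norm)
  have "1/2 \<le> norm z + norm (1/2 - z)"
    using norm_triangle_sub[of "1/2 :: complex" z] by simp
  then have "99/200 < norm z" using d by (simp add: norm_minus_commute)
  then have "z \<noteq> 0" by auto
  have "(1 / z - 2) * z = - 2 * (z - 1/2)" using \<open>z \<noteq> 0\<close> by (simp add: field_simps)
  then have "norm ((1 / z - 2) * z) = norm (- 2 * (z - 1/2))" by (rule arg_cong)
  then have "norm (1 / z - 2) * norm z = norm (- 2 :: complex) * norm (z - 1/2)"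
    unfolding norm_mult .
  also have "\<dots> = 2 * norm (z - 1/2)" by simp
  also have "\<dots> < 1/10 * norm z" using d \<open>99/200 < norm z\<close> by linarith
  finally have "norm (1 / z - 2) < 1/10"
    using \<open>99/200 < norm z\<close> mult_less_cancel_right_pos[of "norm z"] by fastforce
  then show ?thesis using abs_Re_le_cmod[of "1 / z - 2"] by simp
qed

lemma real_if_in_connectedness_locus_near_half:
  assumes "z \<in> connectedness_locus" "dist z (1/2) < 1/200"
  shows "Im z = 0"
  using assms not_connected_attractor_nonreal Re_inverse_ge_near_half
  by (auto simp: connectedness_locus_def)

lemma dist_of_real_half: "dist (complex_of_real x) (1/2) = \<bar>x - 1/2\<bar>"
proof -
  have "dist (complex_of_real x) (of_real (1/2)) = dist x (1/2)" by (rule dist_of_real)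
  then show ?thesis by (simp add: dist_real_def)
qed

theorem lemma10p1p1:
  shows "\<exists>\<alpha>::real. \<alpha> > 1/2 \<and> (\<exists>U::complex set. open U \<and>
           connectedness_locus \<inter> U = complex_of_real ` {1/2..<\<alpha>})"
proof (intro exI conjI)
  let ?U = "{z. dist z (1/2) < 1/200}"
  show "(1/2 + 1/200 :: real) > 1/2" by simp
  show "open ?U" by (intro open_Collect_less continuous_intros)
  show "connectedness_locus \<inter> ?U = complex_of_real ` {1/2..<1/2 + 1/200}"
  proof (intro equalityI subsetI)
    fix z assume z: "z \<in> connectedness_locus \<inter> ?U"
    define x where "x = Re z"
    have "z = of_real x"
      using z real_if_in_connectedness_locus_near_half by (simp add: x_def complex_eq_iff)
    moreover have "\<bar>x - 1/2\<bar> < 1/200"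
      using z dist_of_real_half[of x] \<open>z = of_real x\<close> by simp
    moreover have "1/2 \<le> x"
      using z \<open>z = of_real x\<close> of_real_in_connectedness_locus_iff[of x] \<open>\<bar>x - 1/2\<bar> < 1/200\<close>
      by auto
    ultimately show "z \<in> complex_of_real ` {1/2..<1/2 + 1/200}" by auto
  next
    fix z assume "z \<in> complex_of_real ` {1/2..<1/2 + 1/200}"
    then obtain x where x: "1/2 \<le> x" "x < 1/2 + 1/200" "z = of_real x" by auto
    then show "z \<in> connectedness_locus \<inter> ?U"
      using of_real_in_connectedness_locus_iff[of x] dist_of_real_half[of x] by auto
  qed
qed

end
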